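(* Consider the two-species chemostat $$\dot x_1=(\mu_1(s)-D(t)-b_1)x_1,\quad \dot x_2=(\mu_2(s)-D(t)-b_2)x_2,\quad \dot s=D(t)(s_{in}(t)-s)-g_1(s)x_1-g_2(s)x_2,$$ with state $(x_1,x_2,s)\in(0,+\infty)^2\times A$ and output $y=s$, in either of the admissible settings described in the context. Define $\kappa(s):=\frac{d}{ds}\ln\left(\frac{g_1(s)}{g_2(s)}\right)$ for $s>0$. Suppose that, for some $r>0$, this system is not strongly observable in time $r$. Then there exist an admissible input $(D,s_{in})$ on $[0,r]$ and an initial condition $(x_0,s_0)$ with $x_0=(x_{1,0},x_{2,0})\in(0,+\infty)^2$, $s_0\in A$, such that the $s$-component $s(t)$ of the corresponding solution satisfies, for almost all $t\in[0,r]$, $$\dot s(t)=D(t)(s_{in}(t)-s(t))-\left(x_{2,0}+\frac{g_1(s_0)}{g_2(s_0)}x_{1,0}\right)g_2(s(t))\exp\left(\int_0^t(\mu_2(s(w))-D(w)-b_2)\,dw\right)$$ and $$\kappa(s(t))\,\dot s(t)=\mu_2(s(t))-\mu_1(s(t))+b_1-b_2 .$$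
   Context: For $i=1,2$: $\mu_i,g_i:[0,+\infty)\to[0,+\infty)$ are continuously differentiable bounded functions with $\mu_i(0)=g_i(0)=0$ and $\mu_i(s)>0$, $g_i(s)>0$ for all $s>0$; $b_i\ge 0$ are constants. Admissible settings: either (i) $A=(0,+\infty)$ and the inputs are measurable essentially bounded functions $(D,s_{in})$ with values in $[0,+\infty)^2$; or (ii) $s_{in}(t)\equiv s_{in}>0$ is a fixed constant, $A=(0,s_{in})$, and the input is a measurable essentially bounded $D$ with values in $[0,+\infty)$. For every admissible input and initial state in $(0,+\infty)^2\times A$ there is a unique solution remaining in $(0,+\infty)^2\times A$ for all $t\ge0$. The system is strongly observable in time $r>0$ if for every admissible input on $[0,r]$ and every two distinct initial states in $(0,+\infty)^2\times A$, the $s$-components $s(t),\bar s(t)$ of the two corresponding solutions satisfy $\max_{t\in[0,r]}|s(t)-\bar s(t)|>0$. *)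

theory Defs
  imports "HOL-Analysis.Analysis"
begin

definition C1_nonneg :: "(real \<Rightarrow> real) \<Rightarrow> bool" where
  "C1_nonneg f \<longleftrightarrow> (\<exists>f'. continuous_on {0..} f' \<and>
       (\<forall>x\<ge>0. (f has_real_derivative f' x) (at x within {0..})))"

definition rate_fun :: "(real \<Rightarrow> real) \<Rightarrow> bool" where
  "rate_fun f \<longleftrightarrow> C1_nonneg f \<and> bounded (f ` {0..}) \<and> f 0 = 0
      \<and> (\<forall>s\<ge>0. f s \<ge> 0) \<and> (\<forall>s>0. f s > 0)"

text \<open>Admissible settings: sc = None is setting (i), A = (0,+inf), input (D, s_in);
  sc = Some c is setting (ii), s_in constant equal to c > 0, A = (0,c).\<close>
definition state_set :: "real option \<Rightarrow> real set" where
  "state_set sc = (case sc of None \<Rightarrow> {0<..} | Some c \<Rightarrow> {0<..<c})"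

definition ess_bounded_on :: "real set \<Rightarrow> (real \<Rightarrow> real) \<Rightarrow> bool" where
  "ess_bounded_on S f \<longleftrightarrow> (\<exists>B. AE t in lebesgue. t \<in> S \<longrightarrow> \<bar>f t\<bar> \<le> B)"

definition admissible_input :: "real option \<Rightarrow> real \<Rightarrow> (real \<Rightarrow> real) \<Rightarrow> (real \<Rightarrow> real) \<Rightarrow> bool" where
  "admissible_input sc r D s_in \<longleftrightarrow>
     D measurable_on {0..r} \<and> ess_bounded_on {0..r} D \<and> (\<forall>t\<in>{0..r}. D t \<ge> 0) \<and>
     (case sc of
        None \<Rightarrow> s_in measurable_on {0..r} \<and> ess_bounded_on {0..r} s_in \<and> (\<forall>t\<in>{0..r}. s_in t \<ge> 0)
      | Some c \<Rightarrow> (\<forall>t\<in>{0..r}. s_in t = c))"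

text \<open>(Caratheodory) solution on [0,r] of the chemostat, staying in (0,+inf)^2 x A,
  in integral form: absolutely continuous with the ODE holding a.e.\<close>
definition chemostat_sol ::
  "(real \<Rightarrow> real) \<Rightarrow> (real \<Rightarrow> real) \<Rightarrow> (real \<Rightarrow> real) \<Rightarrow> (real \<Rightarrow> real) \<Rightarrow> real \<Rightarrow> real \<Rightarrow>
   real option \<Rightarrow> real \<Rightarrow> (real \<Rightarrow> real) \<Rightarrow> (real \<Rightarrow> real) \<Rightarrow>
   (real \<Rightarrow> real) \<Rightarrow> (real \<Rightarrow> real) \<Rightarrow> (real \<Rightarrow> real) \<Rightarrow> bool" where
  "chemostat_sol mu1 mu2 g1 g2 b1 b2 sc r D s_in x1 x2 s \<longleftrightarrow>
     (\<forall>t\<in>{0..r}. x1 t > 0 \<and> x2 t > 0 \<and> s t \<in> state_set sc) \<and>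
     (\<lambda>w. (mu1 (s w) - D w - b1) * x1 w) absolutely_integrable_on {0..r} \<and>
     (\<lambda>w. (mu2 (s w) - D w - b2) * x2 w) absolutely_integrable_on {0..r} \<and>
     (\<lambda>w. D w * (s_in w - s w) - g1 (s w) * x1 w - g2 (s w) * x2 w) absolutely_integrable_on {0..r} \<and>
     (\<forall>t\<in>{0..r}.
        x1 t = x1 0 + integral {0..t} (\<lambda>w. (mu1 (s w) - D w - b1) * x1 w) \<and>
        x2 t = x2 0 + integral {0..t} (\<lambda>w. (mu2 (s w) - D w - b2) * x2 w) \<and>
        s t = s 0 + integral {0..t} (\<lambda>w. D w * (s_in w - s w) - g1 (s w) * x1 w - g2 (s w) * x2 w))"

definition strongly_observable ::
  "(real \<Rightarrow> real) \<Rightarrow> (real \<Rightarrow> real) \<Rightarrow> (real \<Rightarrow> real) \<Rightarrow> (real \<Rightarrow> real) \<Rightarrow> real \<Rightarrow> real \<Rightarrow>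
   real option \<Rightarrow> real \<Rightarrow> bool" where
  "strongly_observable mu1 mu2 g1 g2 b1 b2 sc r \<longleftrightarrow>
     (\<forall>D s_in x1 x2 s x1' x2' s'.
        admissible_input sc r D s_in \<and>
        chemostat_sol mu1 mu2 g1 g2 b1 b2 sc r D s_in x1 x2 s \<and>
        chemostat_sol mu1 mu2 g1 g2 b1 b2 sc r D s_in x1' x2' s' \<and>
        (x1 0, x2 0, s 0) \<noteq> (x1' 0, x2' 0, s' 0)
        \<longrightarrow> (SUP t\<in>{0..r}. \<bar>s t - s' t\<bar>) > 0)"

definition kappa :: "(real \<Rightarrow> real) \<Rightarrow> (real \<Rightarrow> real) \<Rightarrow> real \<Rightarrow> real" where
  "kappa g1 g2 s = deriv (\<lambda>u. ln (g1 u / g2 u)) s"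

end

theory Submission
  imports Defs
begin

text \<open>If two distinct initial states produce the same substrate output \<open>s\<close>, the biomasses of both
  solutions solve the same scalar linear equations, so \<open>x\<^sub>i = x\<^sub>i(0) exp E\<^sub>i\<close> and
  \<open>x\<^sub>i' = x\<^sub>i'(0) exp E\<^sub>i\<close> with common exponents
  \<open>E\<^sub>i(t) = \<integral>\<^sub>0\<^sup>t (\<mu>\<^sub>i(s) - D - b\<^sub>i)\<close>.
  Subtracting the two substrate equations shows that
  \<open>g\<^sub>1(s) z\<^sub>1 exp E\<^sub>1 + g\<^sub>2(s) z\<^sub>2 exp E\<^sub>2\<close> vanishes, where \<open>z = x(0) - x'(0) \<noteq> 0\<close>; hence
  \<open>g\<^sub>1(s) exp E\<^sub>1 = c g\<^sub>2(s) exp E\<^sub>2\<close> with \<open>c = g\<^sub>1(s(0)) / g\<^sub>2(s(0))\<close>. This eliminates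
  \<open>x\<^sub>1\<close> from the substrate equation, and differentiating
  \<open>ln (g\<^sub>1(s) / g\<^sub>2(s)) + E\<^sub>1 - E\<^sub>2 = ln c\<close> gives \<open>\<kappa>(s) s' = \<mu>\<^sub>2(s) - \<mu>\<^sub>1(s) + b\<^sub>1 - b\<^sub>2\<close>.

  Solutions are Caratheodory solutions, so derivatives exist only almost everywhere, by Lebesgue's
  differentiation theorem; the exponential formula for the biomasses rests on the fact that a
  Lipschitz function whose derivative vanishes almost everywhere is constant.\<close>

lemma ess_bounded_onE:
  assumes "ess_bounded_on S f"
  obtains N B where "negligible N" "0 \<le> B" "\<And>w. w \<in> S - N \<Longrightarrow> \<bar>f w\<bar> \<le> B"
proof -
  obtain B where "AE t in lebesgue. t \<in> S \<longrightarrow> \<bar>f t\<bar> \<le> B"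
    using assms unfolding ess_bounded_on_def by blast
  then obtain N where "negligible N" "{t. \<not> (t \<in> S \<longrightarrow> \<bar>f t\<bar> \<le> B)} \<subseteq> N"
    unfolding eventually_ae_filter_negligible by blast
  then show ?thesis
    using that[of N "max B 0"] by force
qed

lemma ess_bounded_onI:
  assumes "negligible N" and "\<And>w. w \<in> S - N \<Longrightarrow> \<bar>f w\<bar> \<le> B"
  shows "ess_bounded_on S f"
  unfolding ess_bounded_on_def eventually_ae_filter_negligible
  using assms by (intro exI[of _ B] exI[of _ N]) auto

lemma ess_bounded_on_mult_bounded:
  assumes "ess_bounded_on S f" and "\<And>w. w \<in> S \<Longrightarrow> \<bar>g w\<bar> \<le> C"
  shows "ess_bounded_on S (\<lambda>w. f w * g w)"
proof -
  obtain N B where N: "negligible N" and B: "0 \<le> B" "\<And>w. w \<in> S - N \<Longrightarrow> \<bar>f w\<bar> \<le> B"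
    using ess_bounded_onE[OF assms(1)] by blast
  have "\<bar>f w * g w\<bar> \<le> B * C" if "w \<in> S - N" for w
    unfolding abs_mult using B assms(2) that by (intro mult_mono) auto
  then show ?thesis
    by (rule ess_bounded_onI[OF N])
qed

lemma measurable_ess_bounded_imp_integrable:
  fixes f :: "real \<Rightarrow> real"
  assumes "f measurable_on {a..b}" and "ess_bounded_on {a..b} f"
  shows "f integrable_on {a..b}"
proof -
  obtain N B where N: "negligible N" and B: "0 \<le> B" "\<And>w. w \<in> {a..b} - N \<Longrightarrow> \<bar>f w\<bar> \<le> B"
    using ess_bounded_onE[OF assms(2)] by blast
  define g where "g w = (if w \<in> N then 0 else f w)" for w
  have "g measurable_on {a..b}"
    using measurable_on_spike[OF assms(1) N] by (auto simp: g_def)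
  then have "g \<in> borel_measurable (lebesgue_on {a..b})"
    by (simp add: measurable_on_iff_borel_measurable)
  then have "g integrable_on {a..b}"
    by (rule measurable_bounded_by_integrable_imp_integrable[where g = "\<lambda>_. B"])
       (use B in \<open>auto simp: g_def\<close>)
  then show ?thesis
    by (rule integrable_spike[OF _ N]) (auto simp: g_def)
qed

lemma indefinite_integral_lipschitz:
  fixes f :: "real \<Rightarrow> real"
  assumes f: "f integrable_on {a..b}" and "ess_bounded_on {a..b} f"
  obtains L where "L-lipschitz_on {a..b} (\<lambda>t. integral {a..t} f)"
proof -
  obtain N B where N: "negligible N" and B: "0 \<le> B" "\<And>w. w \<in> {a..b} - N \<Longrightarrow> \<bar>f w\<bar> \<le> B"
    using ess_bounded_onE[OF assms(2)] by blast
  have "dist (integral {a..u} f) (integral {a..t} f) \<le> B * dist u t"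
    if "t \<in> {a..b}" "u \<in> {a..b}" "t \<le> u" for t u
  proof -
    have "integral {a..t} f + integral {t..u} f = integral {a..u} f"
      by (rule Henstock_Kurzweil_Integration.integral_combine)
         (use that in \<open>auto intro: integrable_on_subinterval[OF f]\<close>)
    then have "dist (integral {a..u} f) (integral {a..t} f) = norm (integral {t..u} f)"
      by (auto simp: dist_real_def)
    also have "\<dots> = norm (integral {t..u} (\<lambda>w. if w \<in> N then 0 else f w))"
      by (intro arg_cong[where f = norm] integral_spike[OF N]) auto
    also have "\<dots> \<le> integral {t..u} (\<lambda>_. B)"
    proof (rule integral_norm_bound_integral)
      show "(\<lambda>w. if w \<in> N then 0 else f w) integrable_on {t..u}"
        by (rule integrable_spike[OF _ N, where f = f])
           (use that in \<open>auto intro: integrable_on_subinterval[OF f]\<close>)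
    qed (use that B in auto)
    also have "\<dots> = B * dist u t"
      using that by (simp add: dist_real_def)
    finally show ?thesis .
  qed
  then have "B-lipschitz_on {a..b} (\<lambda>t. integral {a..t} f)"
    by (intro lipschitz_on_leI B) (auto simp: dist_commute)
  then show ?thesis by (rule that)
qed

section \<open>Lebesgue's differentiation theorem on an interval\<close>

lemma integral_right_average_tendsto_ae:
  fixes f :: "real \<Rightarrow> real"
  assumes "\<And>c d. f integrable_on {c..d}"
  obtains N where "negligible N"
    "\<And>x. x \<notin> N \<Longrightarrow> ((\<lambda>h. integral {x..x+h} f / h) \<longlongrightarrow> f x) (at_right 0)"
proof -
  obtain N where "negligible N"
    and N: "\<And>x e. \<lbrakk>x \<notin> N; 0 < e\<rbrakk> \<Longrightarrow> \<exists>d>0. \<forall>h. 0 < h \<and> h < d \<longrightarrow>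
              norm (integral (cbox x (x + h *\<^sub>R One)) f /\<^sub>R h ^ DIM(real) - f x) < e"
    using integrable_ccontinuous_explicit[of f] assms by auto
  show ?thesis
  proof (rule that[OF \<open>negligible N\<close>], rule tendstoI)
    fix x e :: real assume "x \<notin> N" "0 < e"
    then obtain d where "d > 0" and "\<forall>h. 0 < h \<and> h < d \<longrightarrow> \<bar>integral {x..x+h} f / h - f x\<bar> < e"
      using N[OF \<open>x \<notin> N\<close> \<open>0 < e\<close>] by (auto simp: divide_inverse_commute)
    then show "\<forall>\<^sub>F h in at_right 0. dist (integral {x..x+h} f / h) (f x) < e"
      unfolding eventually_at_right_field dist_real_def by blast
  qed
qed

lemma integral_left_average_tendsto_ae:
  fixes f :: "real \<Rightarrow> real"
  assumes f: "\<And>c d. f integrable_on {c..d}"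
  obtains N where "negligible N"
    "\<And>x. x \<notin> N \<Longrightarrow> ((\<lambda>h. integral {x-h..x} f / h) \<longlongrightarrow> f x) (at_right 0)"
proof -
  have reflect: "(\<lambda>w. f (- w)) integrable_on {c..d}" for c d
    using Henstock_Kurzweil_Integration.integrable_reflect_real[where f = f and a = "-d" and b = "-c"]
      f[of "-d" "-c"] by simp
  obtain N where "negligible N"
    and N: "\<And>x. x \<notin> N \<Longrightarrow> ((\<lambda>h. integral {x..x+h} (\<lambda>w. f (- w)) / h) \<longlongrightarrow> f (- x)) (at_right 0)"
    using integral_right_average_tendsto_ae[OF reflect] by blast
  have "negligible (uminus ` N)"
    by (rule negligible_differentiable_image_negligible[OF _ \<open>negligible N\<close>])
       (auto intro!: derivative_intros)
  then show ?thesis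
  proof (rule that)
    fix x assume "x \<notin> uminus ` N"
    then have "- x \<notin> N"
      by force
    moreover have "integral {-x..-x+h} (\<lambda>w. f (- w)) = integral {x-h..x} f" for h
      using Henstock_Kurzweil_Integration.integral_reflect_real[where f = f and a = "x-h" and b = x]
      by simp
    ultimately show "((\<lambda>h. integral {x-h..x} f / h) \<longlongrightarrow> f x) (at_right 0)"
      using N[of "- x"] by simp
  qed
qed

lemma indefinite_integral_has_real_derivative_at:
  fixes f :: "real \<Rightarrow> real"
  assumes f: "f integrable_on {a..b}" and t: "t \<in> {a<..<b}"
    and right: "((\<lambda>h. integral {t..t+h} f / h) \<longlongrightarrow> f t) (at_right 0)"
    and left: "((\<lambda>h. integral {t-h..t} f / h) \<longlongrightarrow> f t) (at_right 0)"
  shows "((\<lambda>u. integral {a..u} f) has_real_derivative f t) (at t)"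
proof -
  define F where "F = (\<lambda>u. integral {a..u} f)"
  have "F (t + h) - F t = integral {t..t+h} f" if "0 < h" "h < b - t" for h
    using Henstock_Kurzweil_Integration.integral_combine[of a t "t + h" f] that t
      integrable_on_subinterval[OF f, of a "t + h"] by (simp add: F_def)
  then have "\<forall>\<^sub>F h in at_right 0. integral {t..t+h} f / h = (F (t + h) - F t) / h"
    unfolding eventually_at_right_field using t by (intro exI[of _ "b - t"]) auto
  moreover have "F (t + - h) - F t = - integral {t-h..t} f" if "0 < h" "h < t - a" for h
    using Henstock_Kurzweil_Integration.integral_combine[of a "t - h" t f] that t
      integrable_on_subinterval[OF f, of a t] by (simp add: F_def)
  then have "\<forall>\<^sub>F h in at_right 0. integral {t-h..t} f / h = (F (t + - h) - F t) / - h"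
    unfolding eventually_at_right_field using t by (intro exI[of _ "t - a"]) auto
  ultimately show ?thesis
    unfolding F_def[symmetric] DERIV_def filterlim_at_split filterlim_at_left_to_right
    using Lim_transform_eventually[OF right] Lim_transform_eventually[OF left] by simp
qed

lemma indefinite_integral_has_real_derivative_ae:
  fixes f :: "real \<Rightarrow> real"
  assumes f: "f integrable_on {a..b}"
  obtains N where "negligible N"
    "\<And>t. t \<in> {a<..<b} - N \<Longrightarrow> ((\<lambda>u. integral {a..u} f) has_real_derivative f t) (at t)"
proof -
  define f0 where "f0 = (\<lambda>w. if w \<in> {a..b} then f w else 0)"
  have "f0 integrable_on UNIV"
    using f integrable_restrict_UNIV unfolding f0_def by blast
  then have f0: "f0 integrable_on {c..d}" for c d
    by (rule integrable_on_subinterval) simp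
  obtain N1 where "negligible N1"
    and right: "\<And>x. x \<notin> N1 \<Longrightarrow> ((\<lambda>h. integral {x..x+h} f0 / h) \<longlongrightarrow> f0 x) (at_right 0)"
    using integral_right_average_tendsto_ae[OF f0] by blast
  obtain N2 where "negligible N2"
    and left: "\<And>x. x \<notin> N2 \<Longrightarrow> ((\<lambda>h. integral {x-h..x} f0 / h) \<longlongrightarrow> f0 x) (at_right 0)"
    using integral_left_average_tendsto_ae[OF f0] by blast
  show ?thesis
  proof (rule that[OF negligible_Un[OF \<open>negligible N1\<close> \<open>negligible N2\<close>]])
    fix t assume t: "t \<in> {a<..<b} - (N1 \<union> N2)"
    have "f0 t = f t"
      using t by (simp add: f0_def)
    then have "((\<lambda>u. integral {a..u} f0) has_real_derivative f t) (at t)"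
      using t indefinite_integral_has_real_derivative_at[OF f0, of t, OF _ right left] by auto
    then show "((\<lambda>u. integral {a..u} f) has_real_derivative f t) (at t)"
    proof (rule has_field_derivative_transform_within_open[where S = "{a<..<b}"])
      show "integral {a..u} f0 = integral {a..u} f" if "u \<in> {a<..<b}" for u
        using that by (intro integral_cong) (auto simp: f0_def)
    qed (use t in auto)
  qed
qed

lemma AE_interval_if_negligible_exceptions:
  fixes a b :: real
  assumes "negligible N" and "\<And>t. t \<in> {a<..<b} - N \<Longrightarrow> P t"
  shows "AE t in lborel. t \<in> {a..b} \<longrightarrow> P t"
proof -
  have "AE t in lebesgue. t \<in> {a..b} \<longrightarrow> P t"
    unfolding eventually_ae_filter_negligible
  proof (intro exI[of _ "N \<union> {a, b}"] conjI)
    show "negligible (N \<union> {a, b})"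
      using assms(1) by simp
    show "{t. \<not> (t \<in> {a..b} \<longrightarrow> P t)} \<subseteq> N \<union> {a, b}"
    proof (rule subsetI, rule ccontr)
      fix t assume "t \<in> {t. \<not> (t \<in> {a..b} \<longrightarrow> P t)}" "t \<notin> N \<union> {a, b}"
      then have "t \<in> {a<..<b} - N" "\<not> P t"
        by auto
      then show False
        using assms(2) by blast
    qed
  qed
  then show ?thesis
    by (simp only: AE_completion_iff)
qed

lemma integral_equation_continuous_on:
  fixes y f :: "real \<Rightarrow> real"
  assumes "f integrable_on {a..b}" and "\<And>t. t \<in> {a..b} \<Longrightarrow> y t = y a + integral {a..t} f"
  shows "continuous_on {a..b} y"
proof -
  have "continuous_on {a..b} (\<lambda>t. y a + integral {a..t} f)"
    by (intro continuous_intros indefinite_integral_continuous_1 assms(1))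
  then show ?thesis
    by (rule continuous_on_eq) (simp add: assms(2)[symmetric])
qed

lemma integral_equation_has_real_derivative_ae:
  fixes y f :: "real \<Rightarrow> real"
  assumes "f integrable_on {a..b}" and y: "\<And>t. t \<in> {a..b} \<Longrightarrow> y t = y a + integral {a..t} f"
  obtains N where "negligible N" "\<And>t. t \<in> {a<..<b} - N \<Longrightarrow> (y has_real_derivative f t) (at t)"
proof -
  obtain N where N: "negligible N"
    and deriv: "\<And>t. t \<in> {a<..<b} - N \<Longrightarrow> ((\<lambda>u. integral {a..u} f) has_real_derivative f t) (at t)"
    using indefinite_integral_has_real_derivative_ae[OF assms(1)] by blast
  show ?thesis
  proof (rule that[OF N])
    fix t assume t: "t \<in> {a<..<b} - N"
    have "((\<lambda>u. y a + integral {a..u} f) has_real_derivative f t) (at t)"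
      using DERIV_add[OF DERIV_const deriv[OF t]] by simp
    then show "(y has_real_derivative f t) (at t)"
      by (rule has_field_derivative_transform_within_open[where S = "{a<..<b}"])
         (use t in \<open>auto simp: y[symmetric]\<close>)
  qed
qed

lemma vanishing_indefinite_integral_imp_zero:
  fixes f :: "real \<Rightarrow> real"
  assumes f: "continuous_on {a..b} f" and "a < b"
    and zero: "\<And>t. t \<in> {a..b} \<Longrightarrow> integral {a..t} f = 0" and t: "t \<in> {a..b}"
  shows "f t = 0"
proof -
  have "((\<lambda>u. integral {a..u} f) has_real_derivative f t) (at t within {a..b})"
    by (rule integral_has_real_derivative[OF f t])
  moreover have "((\<lambda>u. integral {a..u} f) has_real_derivative 0) (at t within {a..b})"
    by (rule has_field_derivative_transform_within[OF DERIV_const zero_less_one t]) (use zero in auto)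
  ultimately show ?thesis
    using vector_derivative_unique_within_closed_interval[of a b t _ "f t" 0] \<open>a < b\<close> t
    unfolding has_real_derivative_iff_has_vector_derivative by auto
qed

section \<open>Lipschitz functions with almost everywhere vanishing derivative\<close>

text \<open>Sard's lemma is available only for maps between spaces \<open>real^'n\<close>, hence the detour
  through \<open>real^1\<close>.\<close>
lemma negligible_image_zero_derivative:
  fixes F :: "real \<Rightarrow> real"
  assumes "\<And>t. t \<in> S \<Longrightarrow> (F has_real_derivative 0) (at t within S)"
  shows "negligible (F ` S)"
proof -
  let ?G = "\<lambda>x::real^1. vec (F (x $ 1)) :: real^1"
  have zero: "(*) (0::real) = (\<lambda>h. 0)" "(*\<^sub>R) (0::real) = (\<lambda>h::real^1. 0)"
    "matrix (\<lambda>h::real^1. 0::real^1) = 0"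
    by (auto simp: matrix_def vec_eq_iff)
  have "(?G has_derivative (\<lambda>h. 0)) (at (vec t) within vec ` S)" if "t \<in> S" for t
    using has_derivative_vector_1[of F "\<lambda>_. 0" t S] assms[OF that]
    by (simp add: has_field_derivative_def zero)
  then have "negligible (?G ` vec ` S)"
    by (intro baby_Sard[where f' = "\<lambda>x h. 0"]) (auto simp: zero)
  moreover have "negligible ((\<lambda>x::real^1. x $ 1) ` T)" if "negligible T" for T
    by (rule negligible_differentiable_image_negligible[OF _ that])
       (auto intro: bounded_linear_imp_differentiable_on[OF bounded_linear_vec_nth])
  moreover have "F ` S = (\<lambda>x::real^1. x $ 1) ` ?G ` vec ` S"
    by (simp add: image_image)
  ultimately show ?thesis
    by simp
qed

text \<open>The exceptional set is mapped to a null set because \<open>F\<close> is Lipschitz, its complement by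
  Sard's lemma; so \<open>F\<close> maps \<open>{a..b}\<close> onto a null interval.\<close>
lemma lipschitz_zero_derivative_ae_imp_constant:
  fixes F :: "real \<Rightarrow> real"
  assumes lip: "L-lipschitz_on {a..b} F" and "negligible N"
    and deriv: "\<And>t. t \<in> {a<..<b} - N \<Longrightarrow> (F has_real_derivative 0) (at t)"
    and t: "t \<in> {a..b}"
  shows "F t = F a"
proof -
  define A where "A = {a..b} \<inter> (N \<union> {a, b})"
  have "negligible A"
    unfolding A_def by (rule negligible_subset[of "N \<union> {a, b}"]) (use \<open>negligible N\<close> in auto)
  then have image_A: "negligible (F ` A)"
  proof (rule negligible_locally_Lipschitz_image[rotated])
    fix x assume "x \<in> A"
    show "\<exists>T B. open T \<and> x \<in> T \<and> (\<forall>y \<in> A \<inter> T. norm (F y - F x) \<le> B * norm (y - x))"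
    proof (intro exI[of _ UNIV] exI[of _ L] conjI ballI)
      fix y assume "y \<in> A \<inter> UNIV"
      then show "norm (F y - F x) \<le> L * norm (y - x)"
        using lipschitz_on_normD[OF lip, of y x] \<open>x \<in> A\<close> by (auto simp: A_def)
    qed auto
  qed auto
  have image_rest: "negligible (F ` ({a<..<b} - N))"
    by (rule negligible_image_zero_derivative) (use deriv in \<open>auto intro: has_field_derivative_at_within\<close>)
  have "F ` {a..b} \<subseteq> F ` A \<union> F ` ({a<..<b} - N)"
    unfolding image_Un[symmetric] by (rule image_mono) (auto simp: A_def)
  then have "negligible (F ` {a..b})"
    using negligible_Un[OF image_A image_rest] by (rule negligible_subset[rotated])
  moreover have "is_interval (F ` {a..b})"
    unfolding is_interval_connected_1
    by (intro connected_continuous_image lipschitz_on_continuous_on[OF lip]) auto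
  then have between: "x \<in> F ` {a..b}" if "u \<in> {a..b}" "v \<in> {a..b}" "F u \<le> x" "x \<le> F v" for u v x
    using that unfolding is_interval_1 by blast
  have "{min (F a) (F t)..max (F a) (F t)} \<subseteq> F ` {a..b}"
    using between[of a t] between[of t a] t by (auto simp: min_def max_def)
  ultimately have "negligible {min (F a) (F t)..max (F a) (F t)}"
    by (rule negligible_subset)
  then have "max (F a) (F t) \<le> min (F a) (F t)"
    using negligible_interval(1)[of "min (F a) (F t)" "max (F a) (F t)"] by simp
  then show ?thesis
    by linarith
qed

lemma lipschitz_on_mult:
  fixes f g :: "'a::metric_space \<Rightarrow> 'b::real_normed_algebra"
  assumes "L-lipschitz_on U f" "M-lipschitz_on U g"
    and "\<And>x. x \<in> U \<Longrightarrow> norm (f x) \<le> A" "\<And>x. x \<in> U \<Longrightarrow> norm (g x) \<le> B" "0 \<le> A" "0 \<le> B"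
  shows "(A * M + B * L)-lipschitz_on U (\<lambda>x. f x * g x)"
proof (rule lipschitz_onI)
  fix x y assume "x \<in> U" "y \<in> U"
  have "dist (f x * g x) (f y * g y) = norm (f x * (g x - g y) + (f x - f y) * g y)"
    by (simp add: dist_norm algebra_simps)
  also have "\<dots> \<le> norm (f x) * dist (g x) (g y) + dist (f x) (f y) * norm (g y)"
    unfolding dist_norm by (intro norm_triangle_le add_mono norm_mult_ineq)
  also have "\<dots> \<le> A * (M * dist x y) + (L * dist x y) * B"
    using assms lipschitz_onD[OF assms(1)] lipschitz_onD[OF assms(2)] lipschitz_on_nonneg[OF assms(1)]
      \<open>x \<in> U\<close> \<open>y \<in> U\<close>
    by (intro add_mono mult_mono) auto
  finally show "dist (f x * g x) (f y * g y) \<le> (A * M + B * L) * dist x y"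
    by (simp add: algebra_simps)
qed (use assms lipschitz_on_nonneg[OF assms(1)] lipschitz_on_nonneg[OF assms(2)] in auto)

lemma exp_lipschitz_on_atMost: "(exp c)-lipschitz_on {..c} exp"
proof (rule lipschitz_on_leI)
  fix p q :: real assume "p \<in> {..c}" "q \<in> {..c}" "p \<le> q"
  have "exp q - exp p \<le> exp q * (q - p)"
    using exp_ge_add_one_self[of "p - q"] mult_left_mono[of "1 + (p - q)" "exp (p - q)" "exp q"]
    by (simp add: exp_diff algebra_simps)
  also have "\<dots> \<le> exp c * (q - p)"
    using \<open>q \<in> {..c}\<close> \<open>p \<le> q\<close> by (intro mult_right_mono) auto
  finally show "dist (exp p) (exp q) \<le> exp c * dist p q"
    using \<open>p \<le> q\<close> by (simp add: dist_real_def)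
qed simp

lemma lipschitz_on_exp_comp:
  assumes "L-lipschitz_on U f" and "\<And>x. x \<in> U \<Longrightarrow> f x \<le> c"
  shows "(exp c * L)-lipschitz_on U (\<lambda>x. exp (f x))"
  using assms by (intro lipschitz_on_compose2 lipschitz_on_subset[OF exp_lipschitz_on_atMost]) auto

lemma integral_equation_lipschitz:
  fixes y f :: "real \<Rightarrow> real"
  assumes "f integrable_on {a..b}" "ess_bounded_on {a..b} f"
    and y: "\<And>t. t \<in> {a..b} \<Longrightarrow> y t = y a + integral {a..t} f"
  obtains L where "L-lipschitz_on {a..b} y"
proof -
  obtain L where "L-lipschitz_on {a..b} (\<lambda>t. integral {a..t} f)"
    using indefinite_integral_lipschitz[OF assms(1,2)] by blast
  then have "(0 + L)-lipschitz_on {a..b} (\<lambda>t. y a + integral {a..t} f)"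
    by (intro lipschitz_on_add lipschitz_on_constant)
  then have "(0 + L)-lipschitz_on {a..b} y"
    using y by (rule lipschitz_on_transform)
  then show ?thesis
    by (rule that)
qed

text \<open>The function \<open>x t * exp (- integral {a..t} c)\<close> is Lipschitz with derivative zero almost
  everywhere.\<close>
lemma linear_integral_equation_solution:
  fixes c x :: "real \<Rightarrow> real"
  assumes c: "c integrable_on {a..b}" "ess_bounded_on {a..b} c"
    and cx: "(\<lambda>w. c w * x w) integrable_on {a..b}"
    and x: "\<And>t. t \<in> {a..b} \<Longrightarrow> x t = x a + integral {a..t} (\<lambda>w. c w * x w)"
    and t: "t \<in> {a..b}"
  shows "x t = x a * exp (integral {a..t} c)"
proof -
  define E where "E = (\<lambda>t. integral {a..t} c)"
  obtain LE where LE: "LE-lipschitz_on {a..b} E"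
    using indefinite_integral_lipschitz[OF c] unfolding E_def by blast
  have E_bound: "- E s \<le> LE * (b - a)" if "s \<in> {a..b}" for s
  proof -
    have "\<bar>E s - E a\<bar> \<le> LE * \<bar>s - a\<bar>"
      using lipschitz_on_normD[OF LE that, of a] that by auto
    also have "\<dots> \<le> LE * (b - a)"
      using that lipschitz_on_nonneg[OF LE] by (auto intro: mult_left_mono)
    finally show ?thesis
      by (simp add: E_def)
  qed
  have exp_lip: "(exp (LE * (b - a)) * LE)-lipschitz_on {a..b} (\<lambda>s. exp (- E s))"
    using E_bound by (intro lipschitz_on_exp_comp lipschitz_on_minus LE)
  obtain B where "0 \<le> B" and B: "\<And>s. s \<in> {a..b} \<Longrightarrow> norm (x s) \<le> B"
    using continuous_on_compact_bound[OF compact_Icc integral_equation_continuous_on[OF cx x]] by blast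
  obtain Lx where x_lip: "Lx-lipschitz_on {a..b} x"
    using integral_equation_lipschitz[OF cx ess_bounded_on_mult_bounded[OF c(2)] x] B
    by (metis real_norm_def)
  obtain Lu where Lu: "Lu-lipschitz_on {a..b} (\<lambda>s. x s * exp (- E s))"
    using lipschitz_on_mult[OF x_lip exp_lip B _ \<open>0 \<le> B\<close>] E_bound by fastforce
  obtain N1 where N1: "negligible N1"
    and dE: "\<And>s. s \<in> {a<..<b} - N1 \<Longrightarrow> (E has_real_derivative c s) (at s)"
    using indefinite_integral_has_real_derivative_ae[OF c(1)] unfolding E_def by blast
  obtain N2 where N2: "negligible N2"
    and dx: "\<And>s. s \<in> {a<..<b} - N2 \<Longrightarrow> (x has_real_derivative c s * x s) (at s)"
    using integral_equation_has_real_derivative_ae[OF cx x] by blast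
  have "((\<lambda>s. x s * exp (- E s)) has_real_derivative 0) (at s)" if "s \<in> {a<..<b} - (N1 \<union> N2)" for s
    using DERIV_mult[OF dx DERIV_fun_exp[OF DERIV_minus[OF dE]]] that by (simp add: algebra_simps)
  then have "x t * exp (- E t) = x a * exp (- E a)"
    by (rule lipschitz_zero_derivative_ae_imp_constant[OF Lu negligible_Un[OF N1 N2] _ t])
  then show ?thesis
    by (simp add: E_def exp_minus field_simps)
qed

section \<open>The chemostat\<close>

lemma state_set_pos: "u \<in> state_set sc \<Longrightarrow> 0 < u"
  by (cases sc) (auto simp: state_set_def)

lemma rate_fun_pos: "rate_fun f \<Longrightarrow> 0 < u \<Longrightarrow> 0 < f u"
  unfolding rate_fun_def by blast

lemma rate_fun_continuous_on: "rate_fun f \<Longrightarrow> continuous_on {0..} f"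
  unfolding rate_fun_def C1_nonneg_def by (metis DERIV_continuous_on atLeast_iff)

lemma rate_fun_comp_continuous_on:
  assumes "rate_fun f" "continuous_on S s" "\<And>t. t \<in> S \<Longrightarrow> 0 < s t"
  shows "continuous_on S (\<lambda>t. f (s t))"
  by (rule continuous_on_compose2[OF rate_fun_continuous_on[OF assms(1)] assms(2)])
     (use assms(3) in \<open>auto simp: less_imp_le\<close>)

lemma rate_fun_bounded:
  assumes "rate_fun f"
  obtains B where "\<And>y. 0 \<le> y \<Longrightarrow> \<bar>f y\<bar> \<le> B"
  using assms unfolding rate_fun_def bounded_iff by (metis atLeast_iff image_eqI real_norm_def)

lemma rate_fun_has_real_derivative:
  assumes "rate_fun f" and "0 < u"
  obtains d where "(f has_real_derivative d) (at u)"
proof -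
  have "at u within {0..} = at u"
    using \<open>0 < u\<close> by (intro at_within_open_subset[of _ "{0<..}"]) auto
  then show ?thesis
    using assms that unfolding rate_fun_def C1_nonneg_def by (metis less_imp_le)
qed

lemma kappa_has_real_derivative:
  assumes "rate_fun g1" "rate_fun g2" and "0 < u"
  shows "((\<lambda>v. ln (g1 v / g2 v)) has_real_derivative kappa g1 g2 u) (at u)"
proof -
  obtain d1 d2 where "(g1 has_real_derivative d1) (at u)" "(g2 has_real_derivative d2) (at u)"
    using rate_fun_has_real_derivative[OF _ \<open>0 < u\<close>] assms(1,2) by metis
  moreover have "0 < g1 u" "0 < g2 u"
    using rate_fun_pos assms by auto
  ultimately have "((\<lambda>v. ln (g1 v / g2 v)) has_real_derivative
      inverse (g1 u / g2 u) * ((d1 * g2 u - g1 u * d2) / (g2 u * g2 u))) (at u)"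
    (is "(_ has_real_derivative ?d) _")
    by (intro DERIV_chain2[OF DERIV_ln] DERIV_divide) auto
  moreover from this have "kappa g1 g2 u = ?d"
    unfolding kappa_def by (rule DERIV_imp_deriv)
  ultimately show ?thesis
    by simp
qed

lemma kappa_times_derivative_eq:
  assumes "rate_fun g1" "rate_fun g2"
    and const: "\<And>u. u \<in> T \<Longrightarrow> ln (g1 (s u) / g2 (s u)) + E1 u - E2 u = C"
    and "open T" "t \<in> T" "0 < s t"
    and "(s has_real_derivative ds) (at t)"
      "(E1 has_real_derivative e1) (at t)" "(E2 has_real_derivative e2) (at t)"
  shows "kappa g1 g2 (s t) * ds = e2 - e1"
proof -
  have "((\<lambda>u. ln (g1 (s u) / g2 (s u)) + E1 u - E2 u) has_real_derivative kappa g1 g2 (s t) * ds + e1 - e2)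
      (at t)"
    by (intro DERIV_diff DERIV_add DERIV_chain2[OF kappa_has_real_derivative] assms)
  moreover have "((\<lambda>u. ln (g1 (s u) / g2 (s u)) + E1 u - E2 u) has_real_derivative 0) (at t)"
    by (rule has_field_derivative_transform_within_open[OF DERIV_const \<open>open T\<close> \<open>t \<in> T\<close>])
       (use const in auto)
  ultimately show ?thesis
    using DERIV_unique by fastforce
qed

lemma admissible_input_dilution:
  assumes "admissible_input sc r D s_in"
  shows "D integrable_on {0..r}" "ess_bounded_on {0..r} D"
  using assms measurable_ess_bounded_imp_integrable unfolding admissible_input_def by auto

lemma chemostat_solD:
  assumes "chemostat_sol mu1 mu2 g1 g2 b1 b2 sc r D s_in x1 x2 s"
  shows "\<And>t. t \<in> {0..r} \<Longrightarrow> 0 < s t"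
    and "(\<lambda>w. (mu1 (s w) - D w - b1) * x1 w) integrable_on {0..r}"
    and "(\<lambda>w. (mu2 (s w) - D w - b2) * x2 w) integrable_on {0..r}"
    and "(\<lambda>w. D w * (s_in w - s w) - g1 (s w) * x1 w - g2 (s w) * x2 w) integrable_on {0..r}"
    and "\<And>t. t \<in> {0..r} \<Longrightarrow> x1 t = x1 0 + integral {0..t} (\<lambda>w. (mu1 (s w) - D w - b1) * x1 w)"
    and "\<And>t. t \<in> {0..r} \<Longrightarrow> x2 t = x2 0 + integral {0..t} (\<lambda>w. (mu2 (s w) - D w - b2) * x2 w)"
    and "\<And>t. t \<in> {0..r} \<Longrightarrow>
           s t = s 0 + integral {0..t} (\<lambda>w. D w * (s_in w - s w) - g1 (s w) * x1 w - g2 (s w) * x2 w)"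
  using assms state_set_pos unfolding chemostat_sol_def absolutely_integrable_on_def by blast+

lemma chemostat_sol_continuous_on:
  assumes "chemostat_sol mu1 mu2 g1 g2 b1 b2 sc r D s_in x1 x2 s"
  shows "continuous_on {0..r} x1" "continuous_on {0..r} x2" "continuous_on {0..r} s"
  using integral_equation_continuous_on chemostat_solD[OF assms] by blast+

lemma growth_coefficient_integrable:
  assumes "rate_fun mu" "continuous_on {0..r} s" "\<And>t. t \<in> {0..r} \<Longrightarrow> 0 < s t"
    and "D integrable_on {0..r}" "ess_bounded_on {0..r} D"
  shows "(\<lambda>w. mu (s w) - D w - b) integrable_on {0..r}"
    and "ess_bounded_on {0..r} (\<lambda>w. mu (s w) - D w - b)"
proof -
  have "continuous_on {0..r} (\<lambda>w. mu (s w))"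
    by (rule rate_fun_comp_continuous_on[OF assms(1-3)])
  then show "(\<lambda>w. mu (s w) - D w - b) integrable_on {0..r}"
    by (intro integrable_diff integrable_continuous_real assms(4) integrable_const_ivl)
  obtain M where M: "\<And>y. 0 \<le> y \<Longrightarrow> \<bar>mu y\<bar> \<le> M"
    using rate_fun_bounded[OF assms(1)] by blast
  obtain N B where "negligible N" and B: "\<And>w. w \<in> {0..r} - N \<Longrightarrow> \<bar>D w\<bar> \<le> B"
    using ess_bounded_onE[OF assms(5)] by blast
  have "\<bar>mu (s w) - D w - b\<bar> \<le> M + B + \<bar>b\<bar>" if "w \<in> {0..r} - N" for w
    using M[of "s w"] B[OF that] assms(3)[of w] that by auto
  then show "ess_bounded_on {0..r} (\<lambda>w. mu (s w) - D w - b)"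
    by (rule ess_bounded_onI[OF \<open>negligible N\<close>])
qed

lemma chemostat_sol_biomass:
  assumes "rate_fun mu1" "rate_fun mu2" and "admissible_input sc r D s_in"
    and sol: "chemostat_sol mu1 mu2 g1 g2 b1 b2 sc r D s_in x1 x2 s" and "t \<in> {0..r}"
  shows "x1 t = x1 0 * exp (integral {0..t} (\<lambda>w. mu1 (s w) - D w - b1))"
    and "x2 t = x2 0 * exp (integral {0..t} (\<lambda>w. mu2 (s w) - D w - b2))"
proof -
  note D = admissible_input_dilution[OF assms(3)]
  note s = chemostat_sol_continuous_on(3)[OF sol] chemostat_solD(1)[OF sol]
  show "x1 t = x1 0 * exp (integral {0..t} (\<lambda>w. mu1 (s w) - D w - b1))"
    by (rule linear_integral_equation_solution[OF growth_coefficient_integrable[OF assms(1) s D]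
          chemostat_solD(2,5)[OF sol] \<open>t \<in> {0..r}\<close>])
  show "x2 t = x2 0 * exp (integral {0..t} (\<lambda>w. mu2 (s w) - D w - b2))"
    by (rule linear_integral_equation_solution[OF growth_coefficient_integrable[OF assms(2) s D]
          chemostat_solD(3,6)[OF sol] \<open>t \<in> {0..r}\<close>])
qed

lemma chemostat_same_substrate_same_uptake:
  assumes g: "rate_fun g1" "rate_fun g2"
    and sol: "chemostat_sol mu1 mu2 g1 g2 b1 b2 sc r D s_in x1 x2 s"
    and sol': "chemostat_sol mu1 mu2 g1 g2 b1 b2 sc r D s_in x1' x2' s'"
    and same: "\<And>t. t \<in> {0..r} \<Longrightarrow> s' t = s t" and "0 < r" and "t \<in> {0..r}"
  shows "g1 (s t) * x1 t + g2 (s t) * x2 t = g1 (s t) * x1' t + g2 (s t) * x2' t"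
proof -
  define f where "f = (\<lambda>w. D w * (s_in w - s w) - g1 (s w) * x1 w - g2 (s w) * x2 w)"
  define f' where "f' = (\<lambda>w. D w * (s_in w - s' w) - g1 (s' w) * x1' w - g2 (s' w) * x2' w)"
  define \<phi> where "\<phi> w = g1 (s w) * (x1 w - x1' w) + g2 (s w) * (x2 w - x2' w)" for w
  have "integral {0..u} \<phi> = 0" if u: "u \<in> {0..r}" for u
  proof -
    have "f integrable_on {0..u}" "f' integrable_on {0..u}"
      unfolding f_def f'_def using u
      by (auto intro: integrable_on_subinterval[OF chemostat_solD(4)[OF sol]]
          integrable_on_subinterval[OF chemostat_solD(4)[OF sol']])
    then have "integral {0..u} (\<lambda>w. f' w - f w) = integral {0..u} f' - integral {0..u} f"
      by (rule integral_diff[rotated])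
    also have "\<dots> = (s' u - s' 0) - (s u - s 0)"
      using chemostat_solD(7)[OF sol u] chemostat_solD(7)[OF sol' u] by (simp add: f_def f'_def)
    also have "\<dots> = 0"
      using same[OF u] same[of 0] \<open>0 < r\<close> by simp
    finally have "integral {0..u} (\<lambda>w. f' w - f w) = 0" .
    moreover have "integral {0..u} (\<lambda>w. f' w - f w) = integral {0..u} \<phi>"
      using u same by (intro integral_cong) (auto simp: f_def f'_def \<phi>_def algebra_simps)
    ultimately show ?thesis
      by simp
  qed
  moreover have "continuous_on {0..r} \<phi>"
  proof -
    have "continuous_on {0..r} (\<lambda>w. g1 (s w))" "continuous_on {0..r} (\<lambda>w. g2 (s w))"
      using rate_fun_comp_continuous_on[OF g(1)] rate_fun_comp_continuous_on[OF g(2)]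
        chemostat_sol_continuous_on(3)[OF sol] chemostat_solD(1)[OF sol] by blast+
    then show ?thesis
      using chemostat_sol_continuous_on(1,2)[OF sol] chemostat_sol_continuous_on(1,2)[OF sol']
      unfolding \<phi>_def by (intro continuous_intros)
  qed
  ultimately have "\<phi> t = 0"
    using vanishing_indefinite_integral_imp_zero[OF _ \<open>0 < r\<close> _ \<open>t \<in> {0..r}\<close>] by blast
  then show ?thesis
    by (simp add: \<phi>_def algebra_simps)
qed

lemma indistinguishable_chemostat_solutions_ratio:
  assumes rates: "rate_fun mu1" "rate_fun mu2" "rate_fun g1" "rate_fun g2"
    and adm: "admissible_input sc r D s_in"
    and sol: "chemostat_sol mu1 mu2 g1 g2 b1 b2 sc r D s_in x1 x2 s"
    and sol': "chemostat_sol mu1 mu2 g1 g2 b1 b2 sc r D s_in x1' x2' s'"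
    and same: "\<And>t. t \<in> {0..r} \<Longrightarrow> s' t = s t"
    and distinct: "(x1 0, x2 0) \<noteq> (x1' 0, x2' 0)" and "0 < r" and t: "t \<in> {0..r}"
  shows "g1 (s t) * exp (integral {0..t} (\<lambda>w. mu1 (s w) - D w - b1))
    = g1 (s 0) / g2 (s 0) * g2 (s t) * exp (integral {0..t} (\<lambda>w. mu2 (s w) - D w - b2))"
proof -
  define E1 where "E1 t = integral {0..t} (\<lambda>w. mu1 (s w) - D w - b1)" for t
  define E2 where "E2 t = integral {0..t} (\<lambda>w. mu2 (s w) - D w - b2)" for t
  define z1 where "z1 = x1 0 - x1' 0"
  define z2 where "z2 = x2 0 - x2' 0"
  have uptake: "g1 (s u) * z1 * exp (E1 u) + g2 (s u) * z2 * exp (E2 u) = 0" if u: "u \<in> {0..r}" for u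
  proof -
    have "integral {0..u} (\<lambda>w. mu1 (s' w) - D w - b1) = E1 u"
      "integral {0..u} (\<lambda>w. mu2 (s' w) - D w - b2) = E2 u"
      unfolding E1_def E2_def using u same by (auto intro!: integral_cong)
    then have "x1' u = x1' 0 * exp (E1 u)" "x2' u = x2' 0 * exp (E2 u)"
      using chemostat_sol_biomass[OF rates(1,2) adm sol' u] by simp_all
    moreover have "x1 u = x1 0 * exp (E1 u)" "x2 u = x2 0 * exp (E2 u)"
      using chemostat_sol_biomass[OF rates(1,2) adm sol u] by (simp_all add: E1_def E2_def)
    ultimately show ?thesis
      using chemostat_same_substrate_same_uptake[OF rates(3,4) sol sol' same \<open>0 < r\<close> u]
      by (simp add: z1_def z2_def algebra_simps)
  qed
  have g_pos: "0 < g1 (s 0)" "0 < g2 (s 0)"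
    using rate_fun_pos[OF rates(3)] rate_fun_pos[OF rates(4)] chemostat_solD(1)[OF sol] \<open>0 < r\<close>
    by auto
  have "z1 \<noteq> 0"
  proof
    assume "z1 = 0"
    then have "z2 \<noteq> 0"
      using distinct same[of 0] \<open>0 < r\<close> by (auto simp: z1_def z2_def)
    then show False
      using uptake[of 0] g_pos \<open>0 < r\<close> \<open>z1 = 0\<close> by simp
  qed
  have ratio: "g1 (s u) * exp (E1 u) = - z2 / z1 * g2 (s u) * exp (E2 u)" if "u \<in> {0..r}" for u
    using uptake[OF that] \<open>z1 \<noteq> 0\<close> by (simp add: field_simps add_eq_0_iff)
  moreover have "- z2 / z1 = g1 (s 0) / g2 (s 0)"
    using ratio[of 0] g_pos \<open>0 < r\<close> by (simp add: E1_def E2_def field_simps)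
  ultimately have "g1 (s t) * exp (E1 t) = g1 (s 0) / g2 (s 0) * g2 (s t) * exp (E2 t)"
    using t by metis
  then show ?thesis
    unfolding E1_def E2_def .
qed

lemma chemostat_growth_exponent_has_real_derivative_ae:
  assumes "rate_fun mu" and adm: "admissible_input sc r D s_in"
    and sol: "chemostat_sol mu1 mu2 g1 g2 b1 b2 sc r D s_in x1 x2 s"
  obtains N where "negligible N" "\<And>t. t \<in> {0<..<r} - N \<Longrightarrow>
    ((\<lambda>u. integral {0..u} (\<lambda>w. mu (s w) - D w - b)) has_real_derivative mu (s t) - D t - b) (at t)"
  using indefinite_integral_has_real_derivative_ae[OF growth_coefficient_integrable(1)[OF assms(1)
        chemostat_sol_continuous_on(3)[OF sol] chemostat_solD(1)[OF sol] admissible_input_dilution[OF adm]]]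
  by blast

lemma chemostat_total_uptake:
  assumes "rate_fun mu1" "rate_fun mu2" and adm: "admissible_input sc r D s_in"
    and sol: "chemostat_sol mu1 mu2 g1 g2 b1 b2 sc r D s_in x1 x2 s" and t: "t \<in> {0..r}"
    and ratio: "g1 (s t) * exp (integral {0..t} (\<lambda>w. mu1 (s w) - D w - b1))
      = g1 (s 0) / g2 (s 0) * g2 (s t) * exp (integral {0..t} (\<lambda>w. mu2 (s w) - D w - b2))"
  shows "g1 (s t) * x1 t + g2 (s t) * x2 t
    = (x2 0 + g1 (s 0) / g2 (s 0) * x1 0) * g2 (s t) * exp (integral {0..t} (\<lambda>w. mu2 (s w) - D w - b2))"
proof -
  have "g1 (s t) * x1 t + g2 (s t) * x2 t
      = x1 0 * (g1 (s t) * exp (integral {0..t} (\<lambda>w. mu1 (s w) - D w - b1)))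
        + x2 0 * g2 (s t) * exp (integral {0..t} (\<lambda>w. mu2 (s w) - D w - b2))"
    using chemostat_sol_biomass[OF assms(1,2) adm sol t] by (simp add: algebra_simps)
  then show ?thesis
    unfolding ratio by (simp add: algebra_simps)
qed

lemma chemostat_log_ratio:
  assumes "rate_fun g1" "rate_fun g2"
    and sol: "chemostat_sol mu1 mu2 g1 g2 b1 b2 sc r D s_in x1 x2 s" and t: "t \<in> {0..r}"
    and ratio: "g1 (s t) * exp (E1 t) = g1 (s 0) / g2 (s 0) * g2 (s t) * exp (E2 t)"
  shows "ln (g1 (s t) / g2 (s t)) + E1 t - E2 t = ln (g1 (s 0) / g2 (s 0))"
proof -
  have g_pos: "0 < g1 (s u)" "0 < g2 (s u)" if "u \<in> {0..r}" for u
    using rate_fun_pos[OF assms(1)] rate_fun_pos[OF assms(2)] chemostat_solD(1)[OF sol that] by auto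
  have "g1 (s t) / g2 (s t) = g1 (s 0) / g2 (s 0) * exp (E2 t - E1 t)"
    using ratio g_pos[OF t] g_pos[of 0] t by (simp add: field_simps exp_diff)
  then show ?thesis
    using g_pos[of 0] t by (simp add: ln_mult ln_div)
qed

lemma chemostat_substrate_derivative_ae:
  assumes rates: "rate_fun mu1" "rate_fun mu2" "rate_fun g1" "rate_fun g2"
    and adm: "admissible_input sc r D s_in"
    and sol: "chemostat_sol mu1 mu2 g1 g2 b1 b2 sc r D s_in x1 x2 s"
    and ratio: "\<And>t. t \<in> {0..r} \<Longrightarrow>
      g1 (s t) * exp (integral {0..t} (\<lambda>w. mu1 (s w) - D w - b1))
        = g1 (s 0) / g2 (s 0) * g2 (s t) * exp (integral {0..t} (\<lambda>w. mu2 (s w) - D w - b2))"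
  shows "AE t in lborel. t \<in> {0..r} \<longrightarrow>
        (\<exists>ds. (s has_real_derivative ds) (at t) \<and>
           ds = D t * (s_in t - s t)
                - (x2 0 + g1 (s 0) / g2 (s 0) * x1 0) * g2 (s t)
                  * exp (integral {0..t} (\<lambda>w. mu2 (s w) - D w - b2)) \<and>
           kappa g1 g2 (s t) * ds = mu2 (s t) - mu1 (s t) + b1 - b2)"
proof -
  define E1 where "E1 = (\<lambda>t. integral {0..t} (\<lambda>w. mu1 (s w) - D w - b1))"
  define E2 where "E2 = (\<lambda>t. integral {0..t} (\<lambda>w. mu2 (s w) - D w - b2))"
  define f where "f = (\<lambda>w. D w * (s_in w - s w) - g1 (s w) * x1 w - g2 (s w) * x2 w)"
  obtain N1 where N1: "negligible N1"
    and dE1: "\<And>t. t \<in> {0<..<r} - N1 \<Longrightarrow> (E1 has_real_derivative mu1 (s t) - D t - b1) (at t)"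
    using chemostat_growth_exponent_has_real_derivative_ae[OF rates(1) adm sol] unfolding E1_def by blast
  obtain N2 where N2: "negligible N2"
    and dE2: "\<And>t. t \<in> {0<..<r} - N2 \<Longrightarrow> (E2 has_real_derivative mu2 (s t) - D t - b2) (at t)"
    using chemostat_growth_exponent_has_real_derivative_ae[OF rates(2) adm sol] unfolding E2_def by blast
  obtain N3 where N3: "negligible N3"
    and ds: "\<And>t. t \<in> {0<..<r} - N3 \<Longrightarrow> (s has_real_derivative f t) (at t)"
    using integral_equation_has_real_derivative_ae[OF chemostat_solD(4,7)[OF sol]] unfolding f_def by blast
  show ?thesis
  proof (rule AE_interval_if_negligible_exceptions[OF negligible_Un[OF negligible_Un[OF N1 N2] N3]])
    fix t assume t: "t \<in> {0<..<r} - (N1 \<union> N2 \<union> N3)"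
    have log_ratio: "ln (g1 (s u) / g2 (s u)) + E1 u - E2 u = ln (g1 (s 0) / g2 (s 0))"
      if "u \<in> {0<..<r}" for u
      using that ratio[of u] by (intro chemostat_log_ratio[OF rates(3,4) sol]) (auto simp: E1_def E2_def)
    have "g1 (s t) * x1 t + g2 (s t) * x2 t = (x2 0 + g1 (s 0) / g2 (s 0) * x1 0) * g2 (s t)
        * exp (integral {0..t} (\<lambda>w. mu2 (s w) - D w - b2))"
      using chemostat_total_uptake[OF rates(1,2) adm sol _ ratio, of t] t by auto
    then have "f t = D t * (s_in t - s t) - (x2 0 + g1 (s 0) / g2 (s 0) * x1 0) * g2 (s t)
        * exp (integral {0..t} (\<lambda>w. mu2 (s w) - D w - b2))"
      by (simp only: f_def diff_diff_eq)
    moreover have "kappa g1 g2 (s t) * f t = (mu2 (s t) - D t - b2) - (mu1 (s t) - D t - b1)"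
      by (rule kappa_times_derivative_eq[OF rates(3,4) log_ratio open_greaterThanLessThan])
         (use t chemostat_solD(1)[OF sol] ds dE1 dE2 in auto)
    moreover have "(s has_real_derivative f t) (at t)"
      using ds t by blast
    ultimately show "\<exists>ds. (s has_real_derivative ds) (at t) \<and>
           ds = D t * (s_in t - s t)
                - (x2 0 + g1 (s 0) / g2 (s 0) * x1 0) * g2 (s t)
                  * exp (integral {0..t} (\<lambda>w. mu2 (s w) - D w - b2)) \<and>
           kappa g1 g2 (s t) * ds = mu2 (s t) - mu1 (s t) + b1 - b2"
      by (intro exI[of _ "f t"]) simp
  qed
qed

lemma SUP_abs_nonpos_imp_zero:
  fixes f :: "'a::topological_space \<Rightarrow> real"
  assumes "continuous_on K f" "compact K" "(SUP t\<in>K. \<bar>f t\<bar>) \<le> 0" "t \<in> K"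
  shows "f t = 0"
proof -
  have "bdd_above ((\<lambda>t. \<bar>f t\<bar>) ` K)"
    using assms(1,2) by (intro bounded_imp_bdd_above compact_imp_bounded compact_continuous_image
        continuous_intros)
  then have "\<bar>f t\<bar> \<le> (SUP t\<in>K. \<bar>f t\<bar>)"
    using \<open>t \<in> K\<close> by (rule cSUP_upper2) simp
  then show ?thesis
    using assms(3) by simp
qed

theorem lemma2p4:
  fixes mu1 mu2 g1 g2 :: "real \<Rightarrow> real" and b1 b2 r :: real and sc :: "real option"
  assumes "rate_fun mu1" "rate_fun mu2" "rate_fun g1" "rate_fun g2"
    and "b1 \<ge> 0" "b2 \<ge> 0"
    and "\<forall>c. sc = Some c \<longrightarrow> c > 0"
    and "r > 0"
    and "\<not> strongly_observable mu1 mu2 g1 g2 b1 b2 sc r"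
  shows "\<exists>D s_in x1 x2 s.
     admissible_input sc r D s_in \<and>
     chemostat_sol mu1 mu2 g1 g2 b1 b2 sc r D s_in x1 x2 s \<and>
     (AE t in lborel. t \<in> {0..r} \<longrightarrow>
        (\<exists>ds. (s has_real_derivative ds) (at t) \<and>
           ds = D t * (s_in t - s t)
                - (x2 0 + g1 (s 0) / g2 (s 0) * x1 0) * g2 (s t)
                  * exp (integral {0..t} (\<lambda>w. mu2 (s w) - D w - b2)) \<and>
           kappa g1 g2 (s t) * ds = mu2 (s t) - mu1 (s t) + b1 - b2))"
proof -
  obtain D s_in x1 x2 s x1' x2' s' where adm: "admissible_input sc r D s_in"
    and sol: "chemostat_sol mu1 mu2 g1 g2 b1 b2 sc r D s_in x1 x2 s"
    and sol': "chemostat_sol mu1 mu2 g1 g2 b1 b2 sc r D s_in x1' x2' s'"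
    and distinct: "(x1 0, x2 0, s 0) \<noteq> (x1' 0, x2' 0, s' 0)"
    and sup: "(SUP t\<in>{0..r}. \<bar>s t - s' t\<bar>) \<le> 0"
    using assms(9) unfolding strongly_observable_def by (auto simp: not_less)
  have same: "s' t = s t" if "t \<in> {0..r}" for t
    using SUP_abs_nonpos_imp_zero[OF continuous_on_diff compact_Icc sup that]
      chemostat_sol_continuous_on(3)[OF sol] chemostat_sol_continuous_on(3)[OF sol'] by simp
  with distinct \<open>r > 0\<close> have "(x1 0, x2 0) \<noteq> (x1' 0, x2' 0)"
    by auto
  then have "g1 (s t) * exp (integral {0..t} (\<lambda>w. mu1 (s w) - D w - b1))
      = g1 (s 0) / g2 (s 0) * g2 (s t) * exp (integral {0..t} (\<lambda>w. mu2 (s w) - D w - b2))"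
    if "t \<in> {0..r}" for t
    using indistinguishable_chemostat_solutions_ratio[OF assms(1-4) adm sol sol' same _ \<open>r > 0\<close> that]
    by blast
  then show ?thesis
    using adm sol chemostat_substrate_derivative_ae[OF assms(1-4) adm sol] by blast
qed

end
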